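(* Let $\mathcal{A}=(Q,q_0,\Delta,F)$ be a probabilistic automaton and $\mathcal{G}$ a set of limit-words. Then: (i) if $\mathcal{G}$ is consistent with $\mathcal{A}$ and contains a value $1$ witness, then $\mathrm{val}(\mathcal{A})=1$; (ii) if $\mathcal{G}$ is complete for $\mathcal{A}$ and $\mathrm{val}(\mathcal{A})=1$, then $\mathcal{G}$ contains a value $1$ witness. In particular, if $\mathcal{G}$ is both consistent with and complete for $\mathcal{A}$, then $\mathrm{val}(\mathcal{A})=1$ if and only if $\mathcal{G}$ contains a value $1$ witness.
   Context: Fix a finite alphabet $A$. A probabilistic automaton is $\mathcal{A}=(Q,q_0,\Delta,F)$ with $Q$ finite, initial state $q_0$, accepting states $F\subseteq Q$, and $\Delta: Q\times A\to\mathcal{D}(Q)$. For $a\in A$ let $M_a(s,t)=\Delta(s,a)(t)$, for $u=a_0\cdots a_{n-1}$ let $M_u=M_{a_0}\cdots M_{a_{n-1}}$ (identity for the empty word), and $\mathbb{P}_{\mathcal{A}}(s\xrightarrow{u}t)=M_u(s,t)$. $\mathbb{P}_{\mathcal{A}}(u)=\sum_{t\in F}\mathbb{P}_{\mathcal{A}}(q_0\xrightarrow{u}t)$ and $\mathrm{val}(\mathcal{A})=\sup_{u\in A^*}\mathbb{P}_{\mathcal{A}}(u)$. A limit-word is a map $\mathbf{u}:Q\times Q\to\{0,1\}$ such that every $s$ has some $t$ with $\mathbf{u}(s,t)=1$. A sequence of words $(u_n)$ reifies $\mathbf{u}$ if for all $s,t$, $\mathbb{P}_{\mathcal{A}}(s\xrightarrow{u_n}t)$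 converges and $\mathbf{u}(s,t)=1\iff\lim_n\mathbb{P}_{\mathcal{A}}(s\xrightarrow{u_n}t)>0$. A set $\mathcal{G}$ of limit-words is consistent with $\mathcal{A}$ if every $\mathbf{u}\in\mathcal{G}$ is reified by some sequence of words. $\mathcal{G}$ is complete for $\mathcal{A}$ if for every sequence of words $(u_n)_{n\in\mathbb{N}}$ there exists $\mathbf{u}\in\mathcal{G}$ such that for all $s,t$: $\limsup_n\mathbb{P}_{\mathcal{A}}(s\xrightarrow{u_n}t)=0\Rightarrow\mathbf{u}(s,t)=0$. A value $1$ witness is a limit-word $\mathbf{u}$ such that for all states $t$, $\mathbf{u}(q_0,t)=1$ implies $t\in F$. *)

theory Defs
  imports "HOL-Analysis.Analysis" "HOL-Probability.Probability_Mass_Function"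
begin

text \<open>A probabilistic automaton over a finite alphabet 'a with finite state type 'q
  is given by an initial state q0, a transition function Delta and accepting states F.
  M_a(s,t) = pmf (Delta s a) t.\<close>

fun path_prob :: "('q::finite \<Rightarrow> 'a \<Rightarrow> 'q pmf) \<Rightarrow> 'a list \<Rightarrow> 'q \<Rightarrow> 'q \<Rightarrow> real" where
  "path_prob Delta [] s t = (if s = t then 1 else 0)"
| "path_prob Delta (a # u) s t = (\<Sum>r\<in>UNIV. pmf (Delta s a) r * path_prob Delta u r t)"

definition acc_prob :: "'q::finite \<Rightarrow> ('q \<Rightarrow> 'a \<Rightarrow> 'q pmf) \<Rightarrow> 'q set \<Rightarrow> 'a list \<Rightarrow> real" where
  "acc_prob q0 Delta F u = (\<Sum>t\<in>F. path_prob Delta u q0 t)"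

definition val :: "'q::finite \<Rightarrow> ('q \<Rightarrow> 'a \<Rightarrow> 'q pmf) \<Rightarrow> 'q set \<Rightarrow> real" where
  "val q0 Delta F = (SUP u\<in>(UNIV :: 'a list set). acc_prob q0 Delta F u)"

type_synonym 'q limit_word = "'q \<Rightarrow> 'q \<Rightarrow> bool"

definition is_limit_word :: "'q limit_word \<Rightarrow> bool" where
  "is_limit_word w \<longleftrightarrow> (\<forall>s. \<exists>t. w s t)"

definition reifies :: "('q::finite \<Rightarrow> 'a \<Rightarrow> 'q pmf) \<Rightarrow> (nat \<Rightarrow> 'a list) \<Rightarrow> 'q limit_word \<Rightarrow> bool" where
  "reifies Delta us w \<longleftrightarrow>
     (\<forall>s t. convergent (\<lambda>n. path_prob Delta (us n) s t) \<and>
            (w s t \<longleftrightarrow> lim (\<lambda>n. path_prob Delta (us n) s t) > 0))"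

definition consistent :: "('q::finite \<Rightarrow> 'a \<Rightarrow> 'q pmf) \<Rightarrow> 'q limit_word set \<Rightarrow> bool" where
  "consistent Delta G \<longleftrightarrow> (\<forall>w\<in>G. \<exists>us. reifies Delta us w)"

definition complete :: "('q::finite \<Rightarrow> 'a \<Rightarrow> 'q pmf) \<Rightarrow> 'q limit_word set \<Rightarrow> bool" where
  "complete Delta G \<longleftrightarrow>
     (\<forall>us :: nat \<Rightarrow> 'a list. \<exists>w\<in>G. \<forall>s t.
        limsup (\<lambda>n. ereal (path_prob Delta (us n) s t)) = 0 \<longrightarrow> \<not> w s t)"

definition value1_witness :: "'q \<Rightarrow> 'q set \<Rightarrow> 'q limit_word \<Rightarrow> bool" where
  "value1_witness q0 F w \<longleftrightarrow> is_limit_word w \<and> (\<forall>t. w q0 t \<longrightarrow> t \<in> F)"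

end

theory Submission
  imports Defs
begin

text \<open>A value 1 witness in a consistent set is reified by words whose probability of reaching a
  rejecting state from the initial state vanishes in the limit, so their acceptance probability
  tends to 1. Conversely, if the value is 1 there are words whose acceptance probability tends
  to 1; for them every rejecting state is reached with probability tending to 0, so a limit-word
  that completeness provides for this sequence can only lead from the initial state to accepting
  states.\<close>

lemma path_prob_nonneg: "path_prob Delta u s t \<ge> 0"
  by (induction u arbitrary: s) (auto intro!: sum_nonneg mult_nonneg_nonneg)

lemma sum_path_prob_eq_1: "(\<Sum>t\<in>UNIV. path_prob Delta u s t) = 1"
proof (induction u arbitrary: s)
  case Nil
  then show ?case by simp
next
  case (Cons a u)
  have "(\<Sum>t\<in>UNIV. path_prob Delta (a # u) s t)
      = (\<Sum>r\<in>UNIV. pmf (Delta s a) r * (\<Sum>t\<in>UNIV. path_prob Delta u r t))"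
    unfolding path_prob.simps sum_distrib_left by (rule sum.swap)
  also have "\<dots> = (\<Sum>r\<in>UNIV. pmf (Delta s a) r)" using Cons by simp
  also have "\<dots> = 1" by (rule sum_pmf_eq_1) auto
  finally show ?case .
qed

lemma acc_prob_eq_1_minus_rejecting:
  "acc_prob q0 Delta F u = 1 - (\<Sum>t\<in>-F. path_prob Delta u q0 t)"
proof -
  have "(\<Sum>t\<in>UNIV. path_prob Delta u q0 t)
      = (\<Sum>t\<in>F. path_prob Delta u q0 t) + (\<Sum>t\<in>-F. path_prob Delta u q0 t)"
    by (subst sum.union_disjoint[symmetric]) (auto intro: arg_cong[where f="\<lambda>A. sum _ A"])
  then show ?thesis using sum_path_prob_eq_1[of Delta u q0] by (simp add: acc_prob_def)
qed

lemma acc_prob_le_1: "acc_prob q0 Delta F u \<le> 1"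
  using sum_nonneg[of "-F" "\<lambda>t. path_prob Delta u q0 t"]
  by (simp add: acc_prob_eq_1_minus_rejecting path_prob_nonneg)

lemma bdd_above_acc_prob: "bdd_above (range (acc_prob q0 Delta F))"
  by (rule bdd_aboveI2[where M=1]) (rule acc_prob_le_1)

lemma acc_prob_le_val: "acc_prob q0 Delta F u \<le> val q0 Delta F"
  unfolding val_def by (rule cSUP_upper[OF _ bdd_above_acc_prob]) simp

lemma val_le_1: "val q0 Delta F \<le> 1"
  unfolding val_def by (rule cSUP_least) (auto simp: acc_prob_le_1)

lemma acc_prob_tendsto_1_iff:
  "(\<lambda>n. acc_prob q0 Delta F (us n)) \<longlonglongrightarrow> 1 \<longleftrightarrow>
   (\<forall>t\<in>-F. (\<lambda>n. path_prob Delta (us n) q0 t) \<longlonglongrightarrow> 0)"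
  (is "?acc \<longleftrightarrow> ?rej")
proof -
  define R where "R n = (\<Sum>t\<in>-F. path_prob Delta (us n) q0 t)" for n
  have "?acc \<longleftrightarrow> (\<lambda>n. 1 - R n) \<longlonglongrightarrow> 1 - 0"
    by (simp add: R_def acc_prob_eq_1_minus_rejecting)
  also have "\<dots> \<longleftrightarrow> R \<longlonglongrightarrow> 0"
    using tendsto_diff[OF tendsto_const[of 1], of "\<lambda>n. 1 - R n" 1 sequentially]
      tendsto_diff[OF tendsto_const[of 1], of R 0 sequentially]
    by auto
  also have "\<dots> \<longleftrightarrow> ?rej"
  proof
    assume R: "R \<longlonglongrightarrow> 0"
    show ?rej
    proof
      fix t assume "t \<in> -F"
      then have "path_prob Delta (us n) q0 t \<le> R n" for n
        unfolding R_def by (intro member_le_sum) (auto intro: path_prob_nonneg)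
      then show "(\<lambda>n. path_prob Delta (us n) q0 t) \<longlonglongrightarrow> 0"
        by (intro tendsto_sandwich[OF _ _ tendsto_const R]) (auto simp: path_prob_nonneg)
    qed
  next
    assume ?rej
    then have "R \<longlonglongrightarrow> (\<Sum>t\<in>-F. 0)"
      unfolding R_def by (intro tendsto_sum) auto
    then show "R \<longlonglongrightarrow> 0" by simp
  qed
  finally show ?thesis .
qed

lemma val_eq_1_iff_acc_prob_tendsto_1:
  "val q0 Delta F = 1 \<longleftrightarrow> (\<exists>us. (\<lambda>n. acc_prob q0 Delta F (us n)) \<longlonglongrightarrow> 1)"
proof
  assume val: "val q0 Delta F = 1"
  have "\<exists>u. 1 - 1 / (real n + 1) < acc_prob q0 Delta F u" for n :: nat
  proof -
    have "1 - 1 / (real n + 1) < val q0 Delta F" using val by simp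
    then show ?thesis unfolding val_def by (subst (asm) less_cSUP_iff[OF _ bdd_above_acc_prob]) auto
  qed
  then obtain us where us: "\<And>n. 1 - 1 / (real n + 1) < acc_prob q0 Delta F (us n)" by metis
  have "(\<lambda>n. 1 / (real n + 1)) \<longlonglongrightarrow> 0"
    using LIMSEQ_inverse_real_of_nat by (simp add: inverse_eq_divide add.commute)
  then have "(\<lambda>n. 1 - 1 / (real n + 1)) \<longlonglongrightarrow> 1 - 0"
    by (intro tendsto_diff tendsto_const)
  moreover have "\<forall>\<^sub>F n in sequentially. 1 - 1 / (real n + 1) \<le> acc_prob q0 Delta F (us n)"
    using us by (intro always_eventually allI less_imp_le)
  moreover have "\<forall>\<^sub>F n in sequentially. acc_prob q0 Delta F (us n) \<le> 1"
    by (intro always_eventually allI acc_prob_le_1)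
  ultimately show "\<exists>us. (\<lambda>n. acc_prob q0 Delta F (us n)) \<longlonglongrightarrow> 1"
    by (fastforce intro: tendsto_sandwich[OF _ _ _ tendsto_const])
next
  assume "\<exists>us. (\<lambda>n. acc_prob q0 Delta F (us n)) \<longlonglongrightarrow> 1"
  then obtain us where "(\<lambda>n. acc_prob q0 Delta F (us n)) \<longlonglongrightarrow> 1" by blast
  then have "1 \<le> val q0 Delta F"
    by (rule LIMSEQ_le_const2) (auto intro: acc_prob_le_val)
  with val_le_1 show "val q0 Delta F = 1" by (rule antisym)
qed

lemma reifies_tendsto_0:
  assumes "reifies Delta us w" "\<not> w s t"
  shows "(\<lambda>n. path_prob Delta (us n) s t) \<longlonglongrightarrow> 0"
proof -
  let ?L = "lim (\<lambda>n. path_prob Delta (us n) s t)"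
  have L: "(\<lambda>n. path_prob Delta (us n) s t) \<longlonglongrightarrow> ?L" and "\<not> ?L > 0"
    using assms unfolding reifies_def by (auto simp: convergent_LIMSEQ_iff)
  moreover have "?L \<ge> 0"
    by (rule LIMSEQ_le_const[OF L]) (auto intro: path_prob_nonneg)
  ultimately show ?thesis by auto
qed

lemma consistent_value1_witness_imp_val_eq_1:
  assumes "consistent Delta G" "w \<in> G" "value1_witness q0 F w"
  shows "val q0 Delta F = 1"
proof -
  obtain us where "reifies Delta us w" using assms(1,2) unfolding consistent_def by blast
  moreover have "\<not> w q0 t" if "t \<in> -F" for t
    using assms(3) that unfolding value1_witness_def by auto
  ultimately have "\<forall>t\<in>-F. (\<lambda>n. path_prob Delta (us n) q0 t) \<longlonglongrightarrow> 0"
    by (auto intro: reifies_tendsto_0)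
  then show ?thesis
    unfolding val_eq_1_iff_acc_prob_tendsto_1 acc_prob_tendsto_1_iff by blast
qed

lemma complete_val_eq_1_imp_value1_witness:
  assumes "complete Delta G" "val q0 Delta F = 1" "\<forall>w\<in>G. is_limit_word w"
  shows "\<exists>w\<in>G. value1_witness q0 F w"
proof -
  obtain us where rej: "\<forall>t\<in>-F. (\<lambda>n. path_prob Delta (us n) q0 t) \<longlonglongrightarrow> 0"
    using assms(2) unfolding val_eq_1_iff_acc_prob_tendsto_1 acc_prob_tendsto_1_iff by blast
  obtain w where "w \<in> G"
    and w: "\<And>s t. limsup (\<lambda>n. ereal (path_prob Delta (us n) s t)) = 0 \<Longrightarrow> \<not> w s t"
    using assms(1) unfolding complete_def by blast
  have "t \<in> F" if "w q0 t" for t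
  proof (rule ccontr)
    assume "t \<notin> F"
    then have "(\<lambda>n. ereal (path_prob Delta (us n) q0 t)) \<longlonglongrightarrow> ereal 0"
      using rej by (intro tendsto_ereal) auto
    then have "limsup (\<lambda>n. ereal (path_prob Delta (us n) q0 t)) = 0"
      by (simp add: lim_imp_Limsup zero_ereal_def)
    with w that show False by blast
  qed
  with \<open>w \<in> G\<close> assms(3) show ?thesis unfolding value1_witness_def by blast
qed

theorem lemma2p9:
  fixes q0 :: "'q::finite" and Delta :: "'q \<Rightarrow> 'a::finite \<Rightarrow> 'q pmf" and F :: "'q set"
    and G :: "'q limit_word set"
  assumes "\<forall>w\<in>G. is_limit_word w"
  shows "(consistent Delta G \<and> (\<exists>w\<in>G. value1_witness q0 F w) \<longrightarrow> val q0 Delta F = 1)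
       \<and> (complete Delta G \<and> val q0 Delta F = 1 \<longrightarrow> (\<exists>w\<in>G. value1_witness q0 F w))
       \<and> (consistent Delta G \<and> complete Delta G \<longrightarrow>
            (val q0 Delta F = 1 \<longleftrightarrow> (\<exists>w\<in>G. value1_witness q0 F w)))"
  using consistent_value1_witness_imp_val_eq_1[of Delta G _ q0 F]
    complete_val_eq_1_imp_value1_witness[of Delta G q0 F, OF _ _ assms]
  by blast

end
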